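(* Let $k_1,k_2\in\frac12\mathbb Z$, let $B_1,B_2$ be positive definite symmetric bilinear forms on a real vector space $V$, and let $L$ be a lattice in $V$ which is integral for both $B_1$ and $B_2$. Let $G\le\mathrm{SL}_2(\mathbb Z)$ have finite index, and for $i=1,2$ let $\chi_i$ be a linear character of $\widetilde G\ltimes H((L,B_i),1)$ with finite-index kernel and $\chi_i(([0,0],\xi))=\xi$. Let $f_1,f_2:\mathbb H\times\mathcal V\to\mathbb C$. Then: (1) the map $\chi_1*\chi_2:\widetilde G\ltimes H((L,B_1+B_2),1)\to\mathbb C^\times$, $(\gamma,\varepsilon\sqrt{c\tau+d},[v,w],\xi)\mapsto\xi\,\chi_1(\gamma,\varepsilon\sqrt{c\tau+d},[v,w],1)\,\chi_2(\gamma,\varepsilon\sqrt{c\tau+d},[v,w],1)$ is a linear character; (2) if $f_i\in J_{k_i,(L,B_i)}(G,\chi_i)$ for $i=1,2$, then $f_1f_2\in J_{k_1+k_2,(L,B_1+B_2)}(G,\chi_1*\chi_2)$; moreover if one of $f_1,f_2$ is a Jacobi cusp form, so is $f_1f_2$.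
   Context: $e(x)=\exp(2\pi ix)$, $q^n=e(n\tau)$, $\tau\in\mathbb H$, $\mathcal V=V\oplus iV$. For a form $B'$ on $V$ (extended $\mathbb C$-bilinearly) with $Q'(v)=\frac12B'(v,v)$, integral on $L$ ($B'(L,L)\subseteq\mathbb Z$), dual lattice $L'^\sharp=\{v:B'(v,L)\subseteq\mathbb Z\}$: the metaplectic group consists of pairs $(\gamma,\varepsilon\sqrt{c\tau+d})$, $\gamma=\begin{pmatrix}a&b\\c&d\end{pmatrix}$, $\varepsilon=\pm1$, principal branch, product $(\gamma_1,\phi_1)(\gamma_2,\phi_2)=(\gamma_1\gamma_2,\phi_1(\gamma_2\tau)\phi_2(\tau))$; $\widetilde G$ is the preimage of $G$. $H((L,B'),1)$ consists of $([v,w],\xi)$, $v,w\in L$, $\xi=\pm1$, product $([v_1,w_1],\xi_1)([v_2,w_2],\xi_2)=([v_1+v_2,w_1+w_2],\xi_1\xi_2e^{\pi i(B'(v_1,w_2)-B'(v_2,w_1))})$; the semidirect product uses the right action $[v,w]\gamma=[av+cw,bv+dw]$ (elements $(\gamma,\varepsilon\sqrt{c\tau+d},[v,w],\xi)$ being products $\gamma\cdot([v,w],\xi)$). Slash: $(f|_{k,B'}g)(\tau,z)=(\varepsilon\sqrt{c\tau+d})^{-2k}\xi\,e(-\frac{cQ'(z+\tau v+w)}{c\tau+d}+\tau Q'(v)+B'(v,z)+\frac12B'(v,w))f(\frac{a\tau+b}{c\tau+d},\frac{z+\tau v+w}{c\tau+d})$. $J_{k,(L,B')}(G,\chi)$ is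 the space of holomorphic $f$ with $f|_{k,B'}g=\chi(g)f$ for $g\in\widetilde G\ltimes H((L,B'),1)$ such that for each $g\in\widetilde{\mathrm{SL}_2(\mathbb Z)}\ltimes H((L,B'),1)$ the (normally convergent) expansion $f|_{k,B'}g=\sum c(n,t)q^ne(B'(t,z))$ satisfies $c(n,t)=0$ unless $n\ge Q'(t)$; $f$ is a Jacobi cusp form if moreover $c(n,t)=0$ unless $n>Q'(t)$. *)

theory Defs
  imports "HOL-Analysis.Analysis" "HOL-Algebra.Coset"
begin

definition e :: "complex \<Rightarrow> complex" where
  "e x = exp (2 * of_real pi * \<i> * x)"

definition upper_half :: "complex set" where
  "upper_half = {\<tau>. Im \<tau> > 0}"

definition cvec :: "real ^ 'n \<Rightarrow> complex ^ 'n" where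
  "cvec v = (\<chi> i. complex_of_real (v $ i))"

definition cform :: "(real ^ 'n::finite \<Rightarrow> real ^ 'n \<Rightarrow> real) \<Rightarrow> complex ^ 'n \<Rightarrow> complex ^ 'n \<Rightarrow> complex" where
  "cform B z w = (\<Sum>i\<in>UNIV. \<Sum>j\<in>UNIV. z $ i * w $ j * complex_of_real (B (axis i 1) (axis j 1)))"

definition cquad :: "(real ^ 'n::finite \<Rightarrow> real ^ 'n \<Rightarrow> real) \<Rightarrow> complex ^ 'n \<Rightarrow> complex" where
  "cquad B z = cform B z z / 2"

definition rquad :: "(real ^ 'n::finite \<Rightarrow> real ^ 'n \<Rightarrow> real) \<Rightarrow> real ^ 'n \<Rightarrow> real" where
  "rquad B v = B v v / 2"

definition pos_def_sym_form :: "(real ^ 'n::finite \<Rightarrow> real ^ 'n \<Rightarrow> real) \<Rightarrow> bool" where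
  "pos_def_sym_form B \<longleftrightarrow> bilinear B \<and> (\<forall>v w. B v w = B w v) \<and> (\<forall>v. v \<noteq> 0 \<longrightarrow> B v v > 0)"

definition is_lattice :: "(real ^ 'n::finite) set \<Rightarrow> bool" where
  "is_lattice L \<longleftrightarrow> (\<exists>A :: real ^ 'n ^ 'n. invertible A \<and>
      L = {A *v (\<chi> i. real_of_int (m i)) | m. True})"

definition integral_on :: "(real ^ 'n::finite \<Rightarrow> real ^ 'n \<Rightarrow> real) \<Rightarrow> (real ^ 'n) set \<Rightarrow> bool" where
  "integral_on B L \<longleftrightarrow> (\<forall>v\<in>L. \<forall>w\<in>L. B v w \<in> \<int>)"

type_synonym sl2 = "int \<times> int \<times> int \<times> int"   \<comment> \<open>(a,b,c,d) = matrix [[a,b],[c,d]]\<close>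

definition SL2Z :: "sl2 set" where
  "SL2Z = {(a,b,c,d). a * d - b * c = 1}"

fun mat_mult :: "sl2 \<Rightarrow> sl2 \<Rightarrow> sl2" where
  "mat_mult (a1,b1,c1,d1) (a2,b2,c2,d2) =
     (a1*a2 + b1*c2, a1*b2 + b1*d2, c1*a2 + d1*c2, c1*b2 + d1*d2)"

definition SL2Z_group :: "sl2 monoid" where
  "SL2Z_group = \<lparr>carrier = SL2Z, mult = mat_mult, one = (1,0,0,1)\<rparr>"

fun moebius :: "sl2 \<Rightarrow> complex \<Rightarrow> complex" where
  "moebius (a,b,c,d) \<tau> = (of_int a * \<tau> + of_int b) / (of_int c * \<tau> + of_int d)"

text \<open>An element (gamma, eps * sqrt(c tau + d)) is stored as (gamma, eps), eps = +1 or -1.\<close>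
type_synonym mp = "sl2 \<times> complex"

fun mp_fun :: "mp \<Rightarrow> complex \<Rightarrow> complex" where
  "mp_fun ((a,b,c,d), \<epsilon>) \<tau> = \<epsilon> * csqrt (of_int c * \<tau> + of_int d)"

definition mp_mult :: "mp \<Rightarrow> mp \<Rightarrow> mp" where
  "mp_mult g1 g2 = (mat_mult (fst g1) (fst g2),
     THE \<epsilon>. \<epsilon> \<in> {1, -1} \<and> (\<forall>\<tau>\<in>upper_half.
        mp_fun g1 (moebius (fst g2) \<tau>) * mp_fun g2 \<tau> = mp_fun (mat_mult (fst g1) (fst g2), \<epsilon>) \<tau>))"

type_synonym 'n heis = "((real ^ 'n) \<times> (real ^ 'n)) \<times> complex"

definition heis_mult :: "(real ^ 'n::finite \<Rightarrow> real ^ 'n \<Rightarrow> real) \<Rightarrow> 'n heis \<Rightarrow> 'n heis \<Rightarrow> 'n heis" where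
  "heis_mult B h1 h2 = (case h1 of ((v1,w1),\<xi>1) \<Rightarrow> case h2 of ((v2,w2),\<xi>2) \<Rightarrow>
     ((v1 + v2, w1 + w2),
      \<xi>1 * \<xi>2 * exp (of_real pi * \<i> * complex_of_real (B v1 w2 - B v2 w1))))"

fun heis_act :: "('n::finite) heis \<Rightarrow> sl2 \<Rightarrow> 'n heis" where
  "heis_act ((v,w),\<xi>) (a,b,c,d) =
     ((of_int a *\<^sub>R v + of_int c *\<^sub>R w, of_int b *\<^sub>R v + of_int d *\<^sub>R w), \<xi>)"

type_synonym 'n jac = "mp \<times> 'n heis"

definition jac_mult :: "(real ^ 'n::finite \<Rightarrow> real ^ 'n \<Rightarrow> real) \<Rightarrow> 'n jac \<Rightarrow> 'n jac \<Rightarrow> 'n jac" where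
  "jac_mult B g1 g2 =
     (mp_mult (fst g1) (fst g2), heis_mult B (heis_act (snd g1) (fst (fst g2))) (snd g2))"

text \<open>The group tilde-G semidirect H((L,B),1), for G a set of matrices in SL2(Z).\<close>
definition jacobi_group :: "sl2 set \<Rightarrow> (real ^ 'n::finite) set \<Rightarrow> (real ^ 'n \<Rightarrow> real ^ 'n \<Rightarrow> real) \<Rightarrow> 'n jac monoid" where
  "jacobi_group G L B = \<lparr>carrier = {((\<gamma>,\<epsilon>),((v,w),\<xi>)). \<gamma> \<in> G \<and> \<epsilon> \<in> {1,-1} \<and> v \<in> L \<and> w \<in> L \<and> \<xi> \<in> {1,-1}},
     mult = jac_mult B, one = (((1,0,0,1),1),((0,0),1))\<rparr>"

definition cstar :: "complex monoid" where
  "cstar = \<lparr>carrier = - {0}, mult = (*), one = 1\<rparr>"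

definition linear_character :: "('a, 'm) monoid_scheme \<Rightarrow> ('a \<Rightarrow> complex) \<Rightarrow> bool" where
  "linear_character Gr ch \<longleftrightarrow> ch \<in> hom Gr cstar"

definition char_prod :: "(('n::finite) jac \<Rightarrow> complex) \<Rightarrow> ('n jac \<Rightarrow> complex) \<Rightarrow> 'n jac \<Rightarrow> complex" where
  "char_prod ch1 ch2 g = (case g of (m,((v,w),\<xi>)) \<Rightarrow> \<xi> * ch1 (m,((v,w),1)) * ch2 (m,((v,w),1)))"

text \<open>k is a half-integer, so -2k is the integer -floor(2k).\<close>
definition slash :: "real \<Rightarrow> (real ^ 'n::finite \<Rightarrow> real ^ 'n \<Rightarrow> real) \<Rightarrow>
    (complex \<Rightarrow> complex ^ 'n \<Rightarrow> complex) \<Rightarrow> 'n jac \<Rightarrow> complex \<Rightarrow> complex ^ 'n \<Rightarrow> complex" where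
  "slash k B f g \<tau> z = (case g of (((a,b,c,d),\<epsilon>),((v,w),\<xi>)) \<Rightarrow>
     let u = z + \<tau> *s cvec v + cvec w; j = of_int c * \<tau> + of_int d in
     (\<epsilon> * csqrt j) powi (- \<lfloor>2 * k\<rfloor>) * \<xi> *
     e (- (of_int c * cquad B u) / j + \<tau> * of_real (rquad B v) + cform B (cvec v) z
        + of_real (B v w) / 2) *
     f (moebius (a,b,c,d) \<tau>) ((1 / j) *s u))"

text \<open>Holomorphy on H x C^n: complex (Frechet) differentiability in all variables.\<close>
definition holo_jac :: "(complex \<Rightarrow> complex ^ 'n::finite \<Rightarrow> complex) \<Rightarrow> bool" where
  "holo_jac f \<longleftrightarrow> (\<forall>\<tau>\<in>upper_half. \<forall>z. \<exists>D.
     ((\<lambda>p. f (fst p) (snd p)) has_derivative D) (at (\<tau>, z)) \<and>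
     (\<forall>c p. D (c * fst p, c *s snd p) = c * D p))"

text \<open>Existence of an (absolutely convergent) Fourier expansion
  F(tau,z) = sum c(n,t) q^n e(B(t,z)) with c(n,t) = 0 unless n >= Q(t)
  (resp. n > Q(t) if strict).\<close>
definition fourier_cond :: "bool \<Rightarrow> (real ^ 'n::finite \<Rightarrow> real ^ 'n \<Rightarrow> real) \<Rightarrow>
    (complex \<Rightarrow> complex ^ 'n \<Rightarrow> complex) \<Rightarrow> bool" where
  "fourier_cond strict B F \<longleftrightarrow> (\<exists>c :: real \<Rightarrow> real ^ 'n \<Rightarrow> complex.
     (\<forall>n t. c n t \<noteq> 0 \<longrightarrow> (if strict then n > rquad B t else n \<ge> rquad B t)) \<and>
     (\<forall>\<tau>\<in>upper_half. \<forall>z.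
        ((\<lambda>(n,t). c n t * e (of_real n * \<tau>) * e (cform B (cvec t) z)) has_sum F \<tau> z) UNIV))"

definition jacobi_form :: "real \<Rightarrow> (real ^ 'n) set \<Rightarrow> (real ^ 'n::finite \<Rightarrow> real ^ 'n \<Rightarrow> real) \<Rightarrow>
    sl2 set \<Rightarrow> ('n jac \<Rightarrow> complex) \<Rightarrow> (complex \<Rightarrow> complex ^ 'n \<Rightarrow> complex) \<Rightarrow> bool" where
  "jacobi_form k L B G ch f \<longleftrightarrow> holo_jac f \<and>
     (\<forall>g\<in>carrier (jacobi_group G L B). \<forall>\<tau>\<in>upper_half. \<forall>z.
        slash k B f g \<tau> z = ch g * f \<tau> z) \<and>
     (\<forall>g\<in>carrier (jacobi_group SL2Z L B). fourier_cond False B (slash k B f g))"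

definition jacobi_cusp_form :: "real \<Rightarrow> (real ^ 'n) set \<Rightarrow> (real ^ 'n::finite \<Rightarrow> real ^ 'n \<Rightarrow> real) \<Rightarrow>
    sl2 set \<Rightarrow> ('n jac \<Rightarrow> complex) \<Rightarrow> (complex \<Rightarrow> complex ^ 'n \<Rightarrow> complex) \<Rightarrow> bool" where
  "jacobi_cusp_form k L B G ch f \<longleftrightarrow> jacobi_form k L B G ch f \<and>
     (\<forall>g\<in>carrier (jacobi_group SL2Z L B). fourier_cond True B (slash k B f g))"

end

theory Submission
  imports Defs
begin

(* The Heisenberg cocycle exp(pi i (B(v1,w2) - B(v2,w1))) of B1 + B2 is the product of the
   cocycles of B1 and B2, each of which is a sign because L is integral for B1 and B2. A character
   with chi((1,1),[0,0],xi) = xi satisfies chi(g,[v,w],xi) = xi chi(g,[v,w],1), so these signs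
   cancel in chi1 * chi2. Every factor of the slash operator is multiplicative in the pair (k, B),
   hence the transformation laws of f1 and f2 multiply to that of f1 f2. For the Fourier
   condition, multiply the two expansions and collect the term q^(n+n') e(B1(t,z) + B2(t',z))
   under (n+n', T), where (B1+B2)(T,-) = B1(t,-) + B2(t',-). Expanding
   B1(t-T,t-T) + B2(t'-T,t'-T) >= 0 gives Q(T) <= Q1(t) + Q2(t') <= n + n', with strict
   inequality as soon as one of the two expansions is cuspidal. *)

lemma has_sum_product_complex:
  fixes a :: "'a \<Rightarrow> complex" and b :: "'b \<Rightarrow> complex"
  assumes ha: "(a has_sum A) UNIV" and hb: "(b has_sum B) UNIV"
  shows "((\<lambda>(x, y). a x * b y) has_sum (A * B)) UNIV"
proof -
  have na: "(\<lambda>x. norm (a x)) summable_on UNIV" and nb: "(\<lambda>y. norm (b y)) summable_on UNIV"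
    using ha hb summable_on_iff_abs_summable_on_complex summable_on_def by blast+
  have "(\<lambda>p. norm ((\<lambda>(x, y). a x * b y) p)) summable_on Sigma UNIV (\<lambda>_. UNIV)"
  proof (subst Infinite_Sum.abs_summable_on_Sigma_iff, intro conjI ballI)
    show "(\<lambda>y. norm ((\<lambda>(x, y). a x * b y) (x, y))) summable_on UNIV" for x
      using summable_on_cmult_right[OF nb, of "norm (a x)"] by (simp add: norm_mult)
    show "(\<lambda>x. norm (\<Sum>\<^sub>\<infinity>y. norm ((\<lambda>(x, y). a x * b y) (x, y)))) summable_on UNIV"
      using summable_on_cmult_left[OF na, of "\<Sum>\<^sub>\<infinity>y. norm (b y)"]
      by (simp add: norm_mult infsum_cmult_right' infsum_nonneg)
  qed
  then have summable: "(\<lambda>(x, y). a x * b y) summable_on Sigma UNIV (\<lambda>_. UNIV)"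
    using summable_on_iff_abs_summable_on_complex by blast
  have "((\<lambda>(x, y). a x * b y) has_sum A * B) (Sigma UNIV (\<lambda>_. UNIV))"
  proof (rule has_sum_SigmaI[OF _ _ summable])
    show "((\<lambda>y. (\<lambda>(x, y). a x * b y) (x, y)) has_sum a x * B) UNIV" for x
      using hb by (simp add: has_sum_cmult_right)
    show "((\<lambda>x. a x * B) has_sum A * B) UNIV"
      using ha by (rule has_sum_cmult_left)
  qed
  then show ?thesis
    by simp
qed

lemma has_sum_fibres:
  fixes f :: "'a \<Rightarrow> 'b::banach" and \<phi> :: "'a \<Rightarrow> 'c"
  assumes "(f has_sum S) UNIV"
  shows "((\<lambda>q. infsum f {p. \<phi> p = q}) has_sum S) UNIV"
proof (rule has_sum_SigmaD[where f = "f \<circ> snd" and B = "\<lambda>q. {p. \<phi> p = q}"])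
  let ?j = "\<lambda>p. (\<phi> p, p)"
  have "inj ?j" and "?j ` UNIV = Sigma UNIV (\<lambda>q. {p. \<phi> p = q})"
    by (auto intro: injI)
  then show "((f \<circ> snd) has_sum S) (Sigma UNIV (\<lambda>q. {p. \<phi> p = q}))"
    using assms has_sum_reindex[of ?j UNIV "f \<circ> snd"] by (simp add: o_def)
next
  fix q
  have "f summable_on {p. \<phi> p = q}"
    using assms summable_on_subset_banach has_sum_imp_summable by blast
  then show "((\<lambda>p. (f \<circ> snd) (q, p)) has_sum infsum f {p. \<phi> p = q}) {p. \<phi> p = q}"
    by (simp add: has_sum_infsum)
qed

lemma e_add: "e (x + y) = e x * e y"
  unfolding e_def by (simp add: distrib_left exp_add)

lemma bilinear_sum_axis_left:
  fixes B :: "real ^ 'n::finite \<Rightarrow> real ^ 'n \<Rightarrow> real"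
  assumes "bilinear B"
  shows "B x y = (\<Sum>i\<in>UNIV. x $ i * B (axis i 1) y)"
proof -
  have lin: "linear (\<lambda>x. B x y)"
    using assms by (simp add: bilinear_def)
  have "B x y = B (\<Sum>i\<in>UNIV. x $ i *\<^sub>R axis i 1) y"
    using basis_expansion[of x] by (simp add: scalar_mult_eq_scaleR)
  also have "\<dots> = (\<Sum>i\<in>UNIV. x $ i * B (axis i 1) y)"
    by (simp add: linear_sum[OF lin] linear_scale[OF lin])
  finally show ?thesis .
qed

lemma cform_cvec:
  assumes "bilinear B"
  shows "cform B (cvec t) z = (\<Sum>j\<in>UNIV. z $ j * complex_of_real (B t (axis j 1)))"
proof -
  have "cform B (cvec t) z
      = (\<Sum>i\<in>UNIV. \<Sum>j\<in>UNIV. complex_of_real (t $ i) * z $ j * complex_of_real (B (axis i 1) (axis j 1)))"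
    unfolding cform_def cvec_def by simp
  also have "\<dots> = (\<Sum>j\<in>UNIV. \<Sum>i\<in>UNIV. complex_of_real (t $ i) * z $ j * complex_of_real (B (axis i 1) (axis j 1)))"
    by (rule sum.swap)
  also have "\<dots> = (\<Sum>j\<in>UNIV. z $ j * complex_of_real (\<Sum>i\<in>UNIV. t $ i * B (axis i 1) (axis j 1)))"
    by (simp add: sum_distrib_left mult_ac)
  finally show ?thesis
    using bilinear_sum_axis_left[OF assms, of t] by simp
qed

lemma cform_add_form: "cform (\<lambda>v w. B1 v w + B2 v w) z w = cform B1 z w + cform B2 z w"
  unfolding cform_def by (simp add: distrib_left sum.distrib)

lemma cquad_add_form: "cquad (\<lambda>v w. B1 v w + B2 v w) z = cquad B1 z + cquad B2 z"
  unfolding cquad_def cform_add_form by (simp add: add_divide_distrib)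

lemma rquad_add_form: "rquad (\<lambda>v w. B1 v w + B2 v w) v = rquad B1 v + rquad B2 v"
  unfolding rquad_def by (simp add: add_divide_distrib)

lemma pos_def_sym_form_bilinear: "pos_def_sym_form B \<Longrightarrow> bilinear B"
  by (simp add: pos_def_sym_form_def)

lemma pos_def_sym_form_nonneg: "pos_def_sym_form B \<Longrightarrow> B v v \<ge> 0"
  unfolding pos_def_sym_form_def by (metis bilinear_lzero less_eq_real_def order_refl)

lemma pos_def_sym_form_add:
  "pos_def_sym_form B1 \<Longrightarrow> pos_def_sym_form B2 \<Longrightarrow> pos_def_sym_form (\<lambda>v w. B1 v w + B2 v w)"
  unfolding pos_def_sym_form_def bilinear_def by (auto intro!: linear_compose_add add_pos_pos)

lemma pos_def_sym_form_represents:
  fixes B :: "real ^ 'n::finite \<Rightarrow> real ^ 'n \<Rightarrow> real"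
  assumes pd: "pos_def_sym_form B" and "linear l"
  shows "\<exists>T. \<forall>x. B T x = l x"
proof -
  have bil: "bilinear B"
    using pd by (rule pos_def_sym_form_bilinear)
  have eq_on_axes: "B T = l'" if lin: "linear l'" and axes: "\<And>j. B T (axis j 1) = l' (axis j 1)" for T l'
  proof (rule linear_eq_stdbasis[OF _ lin])
    show "linear (B T)"
      using bil by (simp add: bilinear_def)
    show "B T b = l' b" if "b \<in> Basis" for b
      using axis_index[OF that] axes by metis
  qed
  define \<Phi> where "\<Phi> T = (\<chi> j. B T (axis j 1))" for T
  have lin: "linear \<Phi>"
    unfolding \<Phi>_def
    by (rule linearI) (simp_all add: vec_eq_iff bilinear_ladd[OF bil] bilinear_lmul[OF bil])
  have "T = 0" if "\<Phi> T = 0" for T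
  proof -
    have "B T = (\<lambda>_. 0)"
      using that by (intro eq_on_axes) (simp_all add: \<Phi>_def vec_eq_iff linear_zero)
    then have "B T T = 0" by simp
    then show "T = 0"
      using pd unfolding pos_def_sym_form_def by fastforce
  qed
  then have "surj \<Phi>"
    using lin by (simp add: linear_injective_0 linear_injective_imp_surjective)
  then obtain T where "\<Phi> T = (\<chi> j. l (axis j 1))"
    by (metis surjD)
  then have "B T = l"
    using assms(2) by (intro eq_on_axes) (simp_all add: \<Phi>_def vec_eq_iff)
  then show ?thesis by auto
qed

lemma rquad_add_form_le:
  fixes B1 B2 :: "real ^ 'n::finite \<Rightarrow> real ^ 'n \<Rightarrow> real"
  assumes pd1: "pos_def_sym_form B1" and pd2: "pos_def_sym_form B2"
    and T: "\<forall>x. B1 T x + B2 T x = B1 t x + B2 t' x"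
  shows "rquad (\<lambda>v w. B1 v w + B2 v w) T \<le> rquad B1 t + rquad B2 t'"
proof -
  have b1: "bilinear B1" and b2: "bilinear B2"
    using pd1 pd2 by (simp_all add: pos_def_sym_form_bilinear)
  have s1: "B1 x y = B1 y x" and s2: "B2 x y = B2 y x" for x y
    using pd1 pd2 by (simp_all add: pos_def_sym_form_def)
  have "0 \<le> B1 (t - T) (t - T) + B2 (t' - T) (t' - T)"
    using pd1 pd2 by (simp add: pos_def_sym_form_nonneg)
  also have "\<dots> = B1 t t + B2 t' t' - 2 * (B1 t T + B2 t' T) + (B1 T T + B2 T T)"
    by (simp add: bilinear_lsub[OF b1] bilinear_rsub[OF b1] bilinear_lsub[OF b2] bilinear_rsub[OF b2]
        s1[of T t] s2[of T t'])
  also have "B1 t T + B2 t' T = B1 T T + B2 T T"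
    using T by simp
  finally show ?thesis
    unfolding rquad_def by simp
qed

lemma cform_cvec_represents:
  assumes "bilinear B" "bilinear B1" "bilinear B2" and "\<forall>x. B T x = B1 t x + B2 t' x"
  shows "cform B (cvec T) z = cform B1 (cvec t) z + cform B2 (cvec t') z"
  using assms by (simp add: cform_cvec distrib_left sum.distrib)

lemma lattice_zero: "is_lattice L \<Longrightarrow> 0 \<in> L"
  unfolding is_lattice_def by (force intro!: exI[of _ "\<lambda>_. 0"] simp: vec_eq_iff matrix_vector_mult_def)

lemma lattice_int_comb:
  assumes "is_lattice L" "v \<in> L" "w \<in> L"
  shows "of_int a *\<^sub>R v + of_int c *\<^sub>R w \<in> L"
proof -
  obtain A :: "real ^ 'a ^ 'a" where L: "L = {A *v (\<chi> i. real_of_int (m i)) | m. True}"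
    using assms(1) unfolding is_lattice_def by blast
  obtain m1 m2 where v: "v = A *v (\<chi> i. real_of_int (m1 i))" and w: "w = A *v (\<chi> i. real_of_int (m2 i))"
    using assms(2,3) L by blast
  have "of_int a *\<^sub>R v + of_int c *\<^sub>R w = A *v (\<chi> i. real_of_int (a * m1 i + c * m2 i))"
    unfolding v w by (simp add: vec_eq_iff matrix_vector_mult_def sum.distrib algebra_simps sum_distrib_left)
  then show ?thesis
    unfolding L by (auto intro!: exI[of _ "\<lambda>i. a * m1 i + c * m2 i"])
qed

lemma exp_pi_int_sign:
  assumes "x \<in> \<int>"
  shows "exp (of_real pi * \<i> * complex_of_real x) \<in> {1, -1}"
proof -
  obtain k where k: "x = of_int k"
    using assms by (auto elim: Ints_cases)
  have "(exp (of_real pi * \<i> * complex_of_real x))\<^sup>2 = exp (complex_of_real (2 * real_of_int k * pi) * \<i>)"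
    by (simp add: k power2_eq_square exp_add[symmetric] mult_ac)
  also have "\<dots> = 1"
    by (rule exp_integer_2pi) simp
  finally show ?thesis
    by (simp add: power2_eq_1_iff)
qed

lemma SL2Z_subgroupD:
  assumes "subgroup G SL2Z_group"
  shows "G \<subseteq> SL2Z" and "(1, 0, 0, 1) \<in> G"
  using subgroup.subset[OF assms] subgroup.one_closed[OF assms] by (simp_all add: SL2Z_group_def)

lemma SL2Z_denom_nonzero:
  assumes "(a, b, c, d) \<in> SL2Z" "\<tau> \<in> upper_half"
  shows "of_int c * \<tau> + of_int d \<noteq> (0::complex)"
proof
  assume j: "of_int c * \<tau> + of_int d = 0"
  then have "Im (of_int c * \<tau> + of_int d) = 0"
    by simp
  then have "of_int c * Im \<tau> = 0"
    by simp
  then have "c = 0"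
    using assms(2) by (simp add: upper_half_def)
  with j assms(1) show False
    by (simp add: SL2Z_def)
qed

lemma mp_mult_one_right:
  assumes "(a, b, c, d) \<in> SL2Z" "\<epsilon> \<in> {1, -1}"
  shows "mp_mult ((a, b, c, d), \<epsilon>) ((1, 0, 0, 1), 1) = ((a, b, c, d), \<epsilon>)"
proof -
  have i: "\<i> \<in> upper_half"
    by (simp add: upper_half_def)
  have "(THE \<epsilon>'. \<epsilon>' \<in> {1, -1} \<and> (\<forall>\<tau>\<in>upper_half.
          \<epsilon> * csqrt (of_int c * \<tau> + of_int d) = \<epsilon>' * csqrt (of_int c * \<tau> + of_int d))) = \<epsilon>"
  proof (rule the_equality)
    fix \<epsilon>' assume "\<epsilon>' \<in> {1, -1} \<and> (\<forall>\<tau>\<in>upper_half.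
        \<epsilon> * csqrt (of_int c * \<tau> + of_int d) = \<epsilon>' * csqrt (of_int c * \<tau> + of_int d))"
    then show "\<epsilon>' = \<epsilon>"
      using i SL2Z_denom_nonzero[OF assms(1) i] by auto
  qed (use assms(2) in simp)
  then show ?thesis
    by (simp add: mp_mult_def)
qed

lemma carrier_jacobi_group:
  "carrier (jacobi_group G L B) =
     {((\<gamma>, \<epsilon>), ((v, w), \<xi>)). \<gamma> \<in> G \<and> \<epsilon> \<in> {1, -1} \<and> v \<in> L \<and> w \<in> L \<and> \<xi> \<in> {1, -1}}"
  by (simp add: jacobi_group_def)

lemma jac_mult_expand:
  "jac_mult B (m, ((v1, w1), \<xi>1)) (((a, b, c, d), \<epsilon>), ((v2, w2), \<xi>2)) =
     (mp_mult m ((a, b, c, d), \<epsilon>),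
      ((of_int a *\<^sub>R v1 + of_int c *\<^sub>R w1 + v2, of_int b *\<^sub>R v1 + of_int d *\<^sub>R w1 + w2),
       \<xi>1 * \<xi>2 * exp (of_real pi * \<i> * complex_of_real
         (B (of_int a *\<^sub>R v1 + of_int c *\<^sub>R w1) w2 - B v2 (of_int b *\<^sub>R v1 + of_int d *\<^sub>R w1)))))"
  by (simp add: jac_mult_def heis_mult_def)

lemma jac_mult_sign:
  assumes "is_lattice L" "integral_on B L"
    and "x \<in> carrier (jacobi_group G L B)" "y \<in> carrier (jacobi_group G L B)"
  shows "snd (snd (jac_mult B x y)) \<in> {1, -1}"
proof -
  obtain m v1 w1 \<xi>1 a b c d \<epsilon> v2 w2 \<xi>2
    where x: "x = (m, ((v1, w1), \<xi>1))" and y: "y = (((a, b, c, d), \<epsilon>), ((v2, w2), \<xi>2))"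
    by (metis prod.collapse)
  have mem: "v1 \<in> L" "w1 \<in> L" "v2 \<in> L" "w2 \<in> L" "\<xi>1 \<in> {1, -1}" "\<xi>2 \<in> {1, -1}"
    using assms(3,4) by (auto simp: x y carrier_jacobi_group)
  then have "B (of_int a *\<^sub>R v1 + of_int c *\<^sub>R w1) w2 - B v2 (of_int b *\<^sub>R v1 + of_int d *\<^sub>R w1) \<in> \<int>"
    using assms(2) lattice_int_comb[OF assms(1)] by (simp add: integral_on_def)
  from exp_pi_int_sign[OF this] show ?thesis
    using mem by (auto simp: x y jac_mult_expand)
qed

lemma character_sign:
  assumes hom: "ch \<in> hom (jacobi_group G L B) cstar"
    and bil: "bilinear B" and G: "subgroup G SL2Z_group" and L: "is_lattice L"
    and sign: "\<And>\<xi>. \<xi> \<in> {1, -1} \<Longrightarrow> ch (((1, 0, 0, 1), 1), ((0, 0), \<xi>)) = \<xi>"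
    and g: "(m, ((v, w), \<xi>)) \<in> carrier (jacobi_group G L B)"
  shows "ch (m, ((v, w), \<xi>)) = \<xi> * ch (m, ((v, w), 1))"
proof -
  obtain a b c d \<epsilon> where m: "m = ((a, b, c, d), \<epsilon>)"
    by (metis prod.collapse)
  have mem: "(a, b, c, d) \<in> SL2Z" "\<epsilon> \<in> {1, -1}" "\<xi> \<in> {1, -1}"
    using g SL2Z_subgroupD(1)[OF G] by (auto simp: m carrier_jacobi_group)
  have x: "(m, ((v, w), 1)) \<in> carrier (jacobi_group G L B)"
    and y: "(((1, 0, 0, 1), 1), ((0, 0), \<xi>)) \<in> carrier (jacobi_group G L B)"
    using g mem SL2Z_subgroupD(2)[OF G] lattice_zero[OF L] by (auto simp: carrier_jacobi_group)
  have "jac_mult B (m, ((v, w), 1)) (((1, 0, 0, 1), 1), ((0, 0), \<xi>)) = (m, ((v, w), \<xi>))"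
    using mem by (simp add: m jac_mult_expand mp_mult_one_right bilinear_lzero[OF bil] bilinear_rzero[OF bil])
  then have "ch (m, ((v, w), \<xi>)) = ch (m, ((v, w), 1)) * ch (((1, 0, 0, 1), 1), ((0, 0), \<xi>))"
    using hom_mult[OF hom x y] by (simp add: jacobi_group_def cstar_def)
  then show ?thesis
    using sign[OF mem(3)] by simp
qed

text \<open>The product \<open>(m, (h, E))\<close> is not known to lie in the group (its metaplectic part is given
  by a definite description), so the sign \<open>E\<close> is moved into the left factor instead, which turns
  the product into \<open>(m, (h, 1))\<close>.\<close>
lemma character_mult_sign:
  assumes hom: "ch \<in> hom (jacobi_group G L B) cstar"
    and "bilinear B" "subgroup G SL2Z_group" "is_lattice L" "integral_on B L"
    and sign: "\<And>\<xi>. \<xi> \<in> {1, -1} \<Longrightarrow> ch (((1, 0, 0, 1), 1), ((0, 0), \<xi>)) = \<xi>"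
    and x: "(m1, (h1, 1)) \<in> carrier (jacobi_group G L B)"
    and y: "(m2, (h2, 1)) \<in> carrier (jacobi_group G L B)"
    and xy: "jac_mult B (m1, (h1, 1)) (m2, (h2, 1)) = (m, (h, E))"
  shows "ch (m, (h, 1)) = E * ch (m1, (h1, 1)) * ch (m2, (h2, 1))"
proof -
  have E: "E \<in> {1, -1}"
    using jac_mult_sign[OF assms(4,5) x y] xy by simp
  obtain v1 w1 where h1: "h1 = (v1, w1)"
    by fastforce
  have x': "(m1, ((v1, w1), E)) \<in> carrier (jacobi_group G L B)"
    using x E by (cases m1) (simp add: h1 carrier_jacobi_group)
  have "jac_mult B (m1, ((v1, w1), E)) (m2, (h2, 1)) = (m, (h, 1))"
    using xy E by (cases m2, cases h2) (auto simp: h1 jac_mult_def heis_mult_def)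
  then have "ch (m, (h, 1)) = ch (m1, ((v1, w1), E)) * ch (m2, (h2, 1))"
    using hom_mult[OF hom x' y] by (simp add: jacobi_group_def cstar_def)
  then show ?thesis
    using character_sign[OF hom assms(2,3,4) sign x'] by (simp add: h1)
qed

lemma char_prod_hom:
  fixes ch1 ch2 :: "'n::finite jac \<Rightarrow> complex"
  assumes hom1: "ch1 \<in> hom (jacobi_group G L B1) cstar"
    and hom2: "ch2 \<in> hom (jacobi_group G L B2) cstar"
    and "bilinear B1" "bilinear B2" "subgroup G SL2Z_group" "is_lattice L"
    and "integral_on B1 L" "integral_on B2 L"
    and sign1: "\<And>\<xi>. \<xi> \<in> {1, -1} \<Longrightarrow> ch1 (((1, 0, 0, 1), 1), ((0, 0), \<xi>)) = \<xi>"
    and sign2: "\<And>\<xi>. \<xi> \<in> {1, -1} \<Longrightarrow> ch2 (((1, 0, 0, 1), 1), ((0, 0), \<xi>)) = \<xi>"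
  shows "char_prod ch1 ch2 \<in> hom (jacobi_group G L (\<lambda>v w. B1 v w + B2 v w)) cstar"
proof (rule homI)
  fix x assume "x \<in> carrier (jacobi_group G L (\<lambda>v w. B1 v w + B2 v w))"
  then obtain m v w \<xi> where x: "x = (m, ((v, w), \<xi>))" and \<xi>: "\<xi> \<in> {1, -1}"
    and x1: "(m, ((v, w), 1)) \<in> carrier (jacobi_group G L B1)"
    and x2: "(m, ((v, w), 1)) \<in> carrier (jacobi_group G L B2)"
    by (auto simp: carrier_jacobi_group)
  show "char_prod ch1 ch2 x \<in> carrier cstar"
    using hom_in_carrier[OF hom1 x1] hom_in_carrier[OF hom2 x2] \<xi>
    by (auto simp: x char_prod_def cstar_def)
next
  fix x y assume x: "x \<in> carrier (jacobi_group G L (\<lambda>v w. B1 v w + B2 v w))"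
    and y: "y \<in> carrier (jacobi_group G L (\<lambda>v w. B1 v w + B2 v w))"
  obtain m1 v1 w1 \<xi>1 a b c d \<epsilon> v2 w2 \<xi>2
    where xe: "x = (m1, ((v1, w1), \<xi>1))" and ye: "y = (((a, b, c, d), \<epsilon>), ((v2, w2), \<xi>2))"
    by (metis prod.collapse)
  define x1 where "x1 = (m1, ((v1, w1), 1::complex))"
  define y1 where "y1 = (((a, b, c, d), \<epsilon>), ((v2, w2), 1::complex))"
  obtain m v w E1 where xy1: "jac_mult B1 x1 y1 = (m, ((v, w), E1))"
    by (metis prod.collapse)
  obtain E2 where xy2: "jac_mult B2 x1 y1 = (m, ((v, w), E2))"
    using xy1 by (simp add: x1_def y1_def jac_mult_expand)
  have xy: "jac_mult (\<lambda>v w. B1 v w + B2 v w) x y = (m, ((v, w), \<xi>1 * \<xi>2 * (E1 * E2)))"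
    using xy1 xy2 by (auto simp: xe ye x1_def y1_def jac_mult_expand exp_add[symmetric] algebra_simps)
  have mem: "x1 \<in> carrier (jacobi_group G L B)" "y1 \<in> carrier (jacobi_group G L B)" for B
    using x y by (auto simp: xe ye x1_def y1_def carrier_jacobi_group)
  have "E1 \<in> {1, -1}" "E2 \<in> {1, -1}"
    using jac_mult_sign[OF assms(6,7) mem] jac_mult_sign[OF assms(6,8) mem] xy1 xy2 by simp_all
  then have sq: "E1 * E1 = 1" "E2 * E2 = 1"
    by auto
  have "ch1 (m, ((v, w), 1)) = E1 * ch1 x1 * ch1 y1" "ch2 (m, ((v, w), 1)) = E2 * ch2 x1 * ch2 y1"
    using character_mult_sign[OF hom1 assms(3,5,6,7) sign1] character_mult_sign[OF hom2 assms(4,5,6,8) sign2]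
      mem xy1 xy2 by (simp_all add: x1_def y1_def)
  then have "char_prod ch1 ch2 (jac_mult (\<lambda>v w. B1 v w + B2 v w) x y)
      = \<xi>1 * \<xi>2 * (E1 * E1) * (E2 * E2) * (ch1 x1 * ch2 x1) * (ch1 y1 * ch2 y1)"
    by (simp add: xy char_prod_def mult_ac)
  also have "\<dots> = char_prod ch1 ch2 x * char_prod ch1 ch2 y"
    by (simp add: sq xe ye x1_def y1_def char_prod_def mult_ac)
  finally show "char_prod ch1 ch2 (x \<otimes>\<^bsub>jacobi_group G L (\<lambda>v w. B1 v w + B2 v w)\<^esub> y)
      = char_prod ch1 ch2 x \<otimes>\<^bsub>cstar\<^esub> char_prod ch1 ch2 y"
    by (simp add: jacobi_group_def cstar_def)
qed


lemma slash_mult: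
  fixes B1 B2 :: "real ^ 'n::finite \<Rightarrow> real ^ 'n \<Rightarrow> real"
  assumes k1: "2 * k1 \<in> \<int>" and k2: "2 * k2 \<in> \<int>" and g: "(a, b, c, d) \<in> SL2Z"
    and \<epsilon>: "\<epsilon> \<in> {1, -1}" and \<tau>: "\<tau> \<in> upper_half"
  shows "slash (k1 + k2) (\<lambda>v w. B1 v w + B2 v w) (\<lambda>\<tau> z. f1 \<tau> z * f2 \<tau> z)
      (((a, b, c, d), \<epsilon>), ((v, w), \<xi>)) \<tau> z
    = \<xi> * slash k1 B1 f1 (((a, b, c, d), \<epsilon>), ((v, w), 1)) \<tau> z
        * slash k2 B2 f2 (((a, b, c, d), \<epsilon>), ((v, w), 1)) \<tau> z"
proof -
  define j where "j = of_int c * \<tau> + of_int d"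
  define u where "u = z + \<tau> *s cvec v + cvec w"
  define X where "X = \<epsilon> * csqrt j"
  have "X \<noteq> 0"
    using \<epsilon> SL2Z_denom_nonzero[OF g \<tau>] by (auto simp: X_def j_def)
  moreover obtain m1 m2 where "2 * k1 = of_int m1" "2 * k2 = of_int m2"
    using k1 k2 by (auto elim!: Ints_cases)
  then have "\<lfloor>2 * (k1 + k2)\<rfloor> = \<lfloor>2 * k1\<rfloor> + \<lfloor>2 * k2\<rfloor>"
    by (simp add: distrib_left flip: of_int_add)
  ultimately have weight: "X powi (- \<lfloor>2 * (k1 + k2)\<rfloor>) = X powi (- \<lfloor>2 * k1\<rfloor>) * X powi (- \<lfloor>2 * k2\<rfloor>)"
    by (metis minus_add_distrib power_int_add)
  define A1 where "A1 = - (of_int c * cquad B1 u) / j + \<tau> * of_real (rquad B1 v)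
    + cform B1 (cvec v) z + of_real (B1 v w) / 2"
  define A2 where "A2 = - (of_int c * cquad B2 u) / j + \<tau> * of_real (rquad B2 v)
    + cform B2 (cvec v) z + of_real (B2 v w) / 2"
  have exponent: "- (of_int c * cquad (\<lambda>v w. B1 v w + B2 v w) u) / j
      + \<tau> * of_real (rquad (\<lambda>v w. B1 v w + B2 v w) v)
      + cform (\<lambda>v w. B1 v w + B2 v w) (cvec v) z + of_real (B1 v w + B2 v w) / 2 = A1 + A2"
    unfolding A1_def A2_def cquad_add_form rquad_add_form cform_add_form
    by (simp add: algebra_simps add_divide_distrib diff_divide_distrib)
  show ?thesis
    unfolding slash_def Let_def prod.case
    unfolding j_def[symmetric] u_def[symmetric] X_def[symmetric]
      exponent weight A1_def[symmetric] A2_def[symmetric] e_add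
    by (simp add: mult_ac)
qed

lemma holo_jac_mult:
  assumes "holo_jac f1" "holo_jac f2"
  shows "holo_jac (\<lambda>\<tau> z. f1 \<tau> z * f2 \<tau> z)"
  unfolding holo_jac_def
proof (intro ballI allI)
  fix \<tau> z assume "\<tau> \<in> upper_half"
  then obtain D1 D2
    where D1: "((\<lambda>p. f1 (fst p) (snd p)) has_derivative D1) (at (\<tau>, z))" "\<forall>c p. D1 (c * fst p, c *s snd p) = c * D1 p"
      and D2: "((\<lambda>p. f2 (fst p) (snd p)) has_derivative D2) (at (\<tau>, z))" "\<forall>c p. D2 (c * fst p, c *s snd p) = c * D2 p"
    using assms unfolding holo_jac_def by blast
  have "((\<lambda>p. f1 (fst p) (snd p) * f2 (fst p) (snd p)) has_derivative (\<lambda>p. f1 \<tau> z * D2 p + D1 p * f2 \<tau> z))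
      (at (\<tau>, z))"
    using has_derivative_mult[OF D1(1) D2(1)] by simp
  moreover have "\<forall>c p. f1 \<tau> z * D2 (c * fst p, c *s snd p) + D1 (c * fst p, c *s snd p) * f2 \<tau> z
      = c * (f1 \<tau> z * D2 p + D1 p * f2 \<tau> z)"
    using D1(2) D2(2) by (simp add: algebra_simps)
  ultimately show "\<exists>D. ((\<lambda>p. f1 (fst p) (snd p) * f2 (fst p) (snd p)) has_derivative D) (at (\<tau>, z))
      \<and> (\<forall>c p. D (c * fst p, c *s snd p) = c * D p)"
    by blast
qed

lemma fourier_cond_mult:
  fixes B1 B2 :: "real ^ 'n::finite \<Rightarrow> real ^ 'n \<Rightarrow> real"
  assumes pd1: "pos_def_sym_form B1" and pd2: "pos_def_sym_form B2"
    and "fourier_cond s1 B1 F1" and "fourier_cond s2 B2 F2"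
    and F: "\<And>\<tau> z. \<tau> \<in> upper_half \<Longrightarrow> F \<tau> z = \<xi> * F1 \<tau> z * F2 \<tau> z"
  shows "fourier_cond (s1 \<or> s2) (\<lambda>v w. B1 v w + B2 v w) F"
proof -
  let ?B = "\<lambda>v w. B1 v w + B2 v w"
  have bil1: "bilinear B1" and bil2: "bilinear B2" and bil: "bilinear ?B"
    using pd1 pd2 pos_def_sym_form_bilinear[OF pos_def_sym_form_add[OF pd1 pd2]]
    by (simp_all add: pos_def_sym_form_bilinear)
  obtain c1 where c1: "\<forall>n t. c1 n t \<noteq> 0 \<longrightarrow> (if s1 then n > rquad B1 t else n \<ge> rquad B1 t)"
    and sum1: "\<forall>\<tau>\<in>upper_half. \<forall>z.
      ((\<lambda>(n, t). c1 n t * e (of_real n * \<tau>) * e (cform B1 (cvec t) z)) has_sum F1 \<tau> z) UNIV"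
    using assms(3) unfolding fourier_cond_def by blast
  obtain c2 where c2: "\<forall>n t. c2 n t \<noteq> 0 \<longrightarrow> (if s2 then n > rquad B2 t else n \<ge> rquad B2 t)"
    and sum2: "\<forall>\<tau>\<in>upper_half. \<forall>z.
      ((\<lambda>(n, t). c2 n t * e (of_real n * \<tau>) * e (cform B2 (cvec t) z)) has_sum F2 \<tau> z) UNIV"
    using assms(4) unfolding fourier_cond_def by blast
  have "\<exists>T. \<forall>x. ?B T x = B1 t x + B2 t' x" for t t'
  proof (rule pos_def_sym_form_represents[OF pos_def_sym_form_add[OF pd1 pd2]])
    show "linear (\<lambda>x. B1 t x + B2 t' x)"
      using bil1 bil2 by (intro linear_compose_add) (simp_all add: bilinear_def)
  qed
  then obtain T where T: "\<And>t t'. \<forall>x. ?B (T t t') x = B1 t x + B2 t' x"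
    by metis
  define \<phi> where "\<phi> = (\<lambda>((n, t), (n', t')). (n + n' :: real, T t t'))"
  define h where "h = (\<lambda>((n, t), (n', t')). \<xi> * c1 n t * c2 n' t')"
  define c where "c N T' = infsum h {p. \<phi> p = (N, T')}" for N T'
  show ?thesis
    unfolding fourier_cond_def
  proof (intro exI[of _ c] conjI allI impI ballI)
    fix N T' assume "c N T' \<noteq> 0"
    then obtain n t n' t' where "\<phi> ((n, t), (n', t')) = (N, T')" "h ((n, t), (n', t')) \<noteq> 0"
      unfolding c_def by (metis (mono_tags, lifting) infsum_0 mem_Collect_eq prod.collapse)
    then have NT: "N = n + n'" "T' = T t t'" and "c1 n t \<noteq> 0" "c2 n' t' \<noteq> 0"
      by (auto simp: \<phi>_def h_def)
    then have "if s1 then n > rquad B1 t else n \<ge> rquad B1 t"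
      and "if s2 then n' > rquad B2 t' else n' \<ge> rquad B2 t'"
      using c1 c2 by auto
    moreover have "rquad ?B T' \<le> rquad B1 t + rquad B2 t'"
      using rquad_add_form_le[OF pd1 pd2 T[of t t']] by (simp only: NT)
    ultimately show "if s1 \<or> s2 then N > rquad ?B T' else N \<ge> rquad ?B T'"
      unfolding NT(1) by (auto split: if_splits)
  next
    fix \<tau> z assume \<tau>: "\<tau> \<in> upper_half"
    define a where "a = (\<lambda>(n, t). c1 n t * e (of_real n * \<tau>) * e (cform B1 (cvec t) z))"
    define b where "b = (\<lambda>(n, t). c2 n t * e (of_real n * \<tau>) * e (cform B2 (cvec t) z))"
    define w where "w = (\<lambda>(N, T'). e (of_real N * \<tau>) * e (cform ?B (cvec T') z))"
    have "((\<lambda>(x, y). a x * b y) has_sum F1 \<tau> z * F2 \<tau> z) UNIV"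
      using sum1 sum2 \<tau> by (intro has_sum_product_complex) (simp_all add: a_def b_def)
    then have "((\<lambda>p. \<xi> * (\<lambda>(x, y). a x * b y) p) has_sum F \<tau> z) UNIV"
      using has_sum_cmult_right F[OF \<tau>] by (simp add: mult.assoc)
    moreover have "\<xi> * (\<lambda>(x, y). a x * b y) p = h p * w (\<phi> p)" for p
    proof -
      obtain n t n' t' where p: "p = ((n, t), (n', t'))"
        by (metis prod.collapse)
      have "cform ?B (cvec (T t t')) z = cform B1 (cvec t) z + cform B2 (cvec t') z"
        using cform_cvec_represents[OF bil bil1 bil2 T] .
      then show ?thesis
        by (simp add: p a_def b_def h_def w_def \<phi>_def distrib_left e_add mult_ac)
    qed
    ultimately have "((\<lambda>p. h p * w (\<phi> p)) has_sum F \<tau> z) UNIV"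
      by simp
    then have "((\<lambda>q. infsum (\<lambda>p. h p * w (\<phi> p)) {p. \<phi> p = q}) has_sum F \<tau> z) UNIV"
      by (rule has_sum_fibres)
    moreover have "infsum (\<lambda>p. h p * w (\<phi> p)) {p. \<phi> p = q} = c (fst q) (snd q) * w q" for q
    proof -
      have "infsum (\<lambda>p. h p * w (\<phi> p)) {p. \<phi> p = q} = infsum (\<lambda>p. h p * w q) {p. \<phi> p = q}"
        by (rule infsum_cong) simp
      then show ?thesis
        by (simp add: c_def infsum_cmult_left')
    qed
    ultimately show "((\<lambda>(N, T'). c N T' * e (of_real N * \<tau>) * e (cform ?B (cvec T') z)) has_sum F \<tau> z) UNIV"
      by (simp add: w_def split_beta' mult.assoc)
  qed
qed

lemma slash_fourier_cond_mult:
  fixes B1 B2 :: "real ^ 'n::finite \<Rightarrow> real ^ 'n \<Rightarrow> real"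
  assumes pd1: "pos_def_sym_form B1" and pd2: "pos_def_sym_form B2"
    and k1: "2 * k1 \<in> \<int>" and k2: "2 * k2 \<in> \<int>"
    and F1: "\<forall>g\<in>carrier (jacobi_group SL2Z L B1). fourier_cond s1 B1 (slash k1 B1 f1 g)"
    and F2: "\<forall>g\<in>carrier (jacobi_group SL2Z L B2). fourier_cond s2 B2 (slash k2 B2 f2 g)"
    and g: "g \<in> carrier (jacobi_group SL2Z L (\<lambda>v w. B1 v w + B2 v w))"
  shows "fourier_cond (s1 \<or> s2) (\<lambda>v w. B1 v w + B2 v w)
    (slash (k1 + k2) (\<lambda>v w. B1 v w + B2 v w) (\<lambda>\<tau> z. f1 \<tau> z * f2 \<tau> z) g)"
proof -
  obtain a b c d \<epsilon> v w \<xi> where ge: "g = (((a, b, c, d), \<epsilon>), ((v, w), \<xi>))"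
    by (metis prod.collapse)
  have mem: "(a, b, c, d) \<in> SL2Z" "\<epsilon> \<in> {1, -1}"
    and g1: "(((a, b, c, d), \<epsilon>), ((v, w), 1)) \<in> carrier (jacobi_group SL2Z L B1)"
    and g2: "(((a, b, c, d), \<epsilon>), ((v, w), 1)) \<in> carrier (jacobi_group SL2Z L B2)"
    using g by (auto simp: ge carrier_jacobi_group)
  show ?thesis
    unfolding ge
  proof (rule fourier_cond_mult[OF pd1 pd2])
    show "fourier_cond s1 B1 (slash k1 B1 f1 (((a, b, c, d), \<epsilon>), ((v, w), 1)))"
      using F1 g1 by blast
    show "fourier_cond s2 B2 (slash k2 B2 f2 (((a, b, c, d), \<epsilon>), ((v, w), 1)))"
      using F2 g2 by blast
  qed (rule slash_mult[OF k1 k2 mem])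
qed

lemma jacobi_form_mult:
  assumes pd1: "pos_def_sym_form B1" and pd2: "pos_def_sym_form B2"
    and k1: "2 * k1 \<in> \<int>" and k2: "2 * k2 \<in> \<int>" and G: "subgroup G SL2Z_group"
    and J1: "jacobi_form k1 L B1 G ch1 f1" and J2: "jacobi_form k2 L B2 G ch2 f2"
  shows "jacobi_form (k1 + k2) L (\<lambda>v w. B1 v w + B2 v w) G (char_prod ch1 ch2) (\<lambda>\<tau> z. f1 \<tau> z * f2 \<tau> z)"
proof -
  have "slash (k1 + k2) (\<lambda>v w. B1 v w + B2 v w) (\<lambda>\<tau> z. f1 \<tau> z * f2 \<tau> z) g \<tau> z
      = char_prod ch1 ch2 g * (f1 \<tau> z * f2 \<tau> z)"
    if g: "g \<in> carrier (jacobi_group G L (\<lambda>v w. B1 v w + B2 v w))" and \<tau>: "\<tau> \<in> upper_half" for g \<tau> z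
  proof -
    obtain a b c d \<epsilon> v w \<xi> where ge: "g = (((a, b, c, d), \<epsilon>), ((v, w), \<xi>))"
      by (metis prod.collapse)
    have mem: "(a, b, c, d) \<in> SL2Z" "\<epsilon> \<in> {1, -1}"
      using g SL2Z_subgroupD(1)[OF G] by (auto simp: ge carrier_jacobi_group)
    have "(((a, b, c, d), \<epsilon>), ((v, w), 1)) \<in> carrier (jacobi_group G L B)" for B
      using g by (auto simp: ge carrier_jacobi_group)
    then show ?thesis
      using J1 J2 \<tau> unfolding ge slash_mult[OF k1 k2 mem \<tau>]
      by (simp add: jacobi_form_def char_prod_def mult_ac)
  qed
  moreover have "\<forall>g\<in>carrier (jacobi_group SL2Z L (\<lambda>v w. B1 v w + B2 v w)).
      fourier_cond (False \<or> False) (\<lambda>v w. B1 v w + B2 v w)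
        (slash (k1 + k2) (\<lambda>v w. B1 v w + B2 v w) (\<lambda>\<tau> z. f1 \<tau> z * f2 \<tau> z) g)"
    using J1 J2 unfolding jacobi_form_def by (blast intro: slash_fourier_cond_mult[OF pd1 pd2 k1 k2])
  moreover have "holo_jac (\<lambda>\<tau> z. f1 \<tau> z * f2 \<tau> z)"
    using J1 J2 unfolding jacobi_form_def by (intro holo_jac_mult) simp_all
  ultimately show ?thesis
    by (simp add: jacobi_form_def)
qed

lemma jacobi_cusp_form_mult:
  assumes pd1: "pos_def_sym_form B1" and pd2: "pos_def_sym_form B2"
    and k1: "2 * k1 \<in> \<int>" and k2: "2 * k2 \<in> \<int>" and G: "subgroup G SL2Z_group"
    and J1: "jacobi_form k1 L B1 G ch1 f1" and J2: "jacobi_form k2 L B2 G ch2 f2"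
    and cusp: "jacobi_cusp_form k1 L B1 G ch1 f1 \<or> jacobi_cusp_form k2 L B2 G ch2 f2"
  shows "jacobi_cusp_form (k1 + k2) L (\<lambda>v w. B1 v w + B2 v w) G (char_prod ch1 ch2) (\<lambda>\<tau> z. f1 \<tau> z * f2 \<tau> z)"
proof -
  have "fourier_cond True (\<lambda>v w. B1 v w + B2 v w)
      (slash (k1 + k2) (\<lambda>v w. B1 v w + B2 v w) (\<lambda>\<tau> z. f1 \<tau> z * f2 \<tau> z) g)"
    if g: "g \<in> carrier (jacobi_group SL2Z L (\<lambda>v w. B1 v w + B2 v w))" for g
    using cusp
  proof
    assume "jacobi_cusp_form k1 L B1 G ch1 f1"
    then show ?thesis
      using J2 slash_fourier_cond_mult[OF pd1 pd2 k1 k2 _ _ g, of True f1 False f2]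
      by (simp add: jacobi_cusp_form_def jacobi_form_def)
  next
    assume "jacobi_cusp_form k2 L B2 G ch2 f2"
    then show ?thesis
      using J1 slash_fourier_cond_mult[OF pd1 pd2 k1 k2 _ _ g, of False f1 True f2]
      by (simp add: jacobi_cusp_form_def jacobi_form_def)
  qed
  then show ?thesis
    using jacobi_form_mult[OF pd1 pd2 k1 k2 G J1 J2] by (simp add: jacobi_cusp_form_def)
qed

theorem proposition2p12:
  fixes k1 k2 :: real
    and B1 B2 :: "real ^ 'n::finite \<Rightarrow> real ^ 'n \<Rightarrow> real"
    and L :: "(real ^ 'n) set"
    and G :: "sl2 set"
    and ch1 ch2 :: "'n jac \<Rightarrow> complex"
    and f1 f2 :: "complex \<Rightarrow> complex ^ 'n \<Rightarrow> complex"
  assumes "2 * k1 \<in> \<int>" and "2 * k2 \<in> \<int>"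
    and "pos_def_sym_form B1" and "pos_def_sym_form B2"
    and "is_lattice L" and "integral_on B1 L" and "integral_on B2 L"
    and "subgroup G SL2Z_group" and "finite (rcosets\<^bsub>SL2Z_group\<^esub> G)"
    and "linear_character (jacobi_group G L B1) ch1"
    and "finite (rcosets\<^bsub>jacobi_group G L B1\<^esub> (kernel (jacobi_group G L B1) cstar ch1))"
    and "\<And>\<xi>. \<xi> \<in> {1, -1} \<Longrightarrow> ch1 (((1,0,0,1),1),((0,0),\<xi>)) = \<xi>"
    and "linear_character (jacobi_group G L B2) ch2"
    and "finite (rcosets\<^bsub>jacobi_group G L B2\<^esub> (kernel (jacobi_group G L B2) cstar ch2))"
    and "\<And>\<xi>. \<xi> \<in> {1, -1} \<Longrightarrow> ch2 (((1,0,0,1),1),((0,0),\<xi>)) = \<xi>"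
  shows "linear_character (jacobi_group G L (\<lambda>v w. B1 v w + B2 v w)) (char_prod ch1 ch2)
    \<and> ((jacobi_form k1 L B1 G ch1 f1 \<and> jacobi_form k2 L B2 G ch2 f2) \<longrightarrow>
        (jacobi_form (k1 + k2) L (\<lambda>v w. B1 v w + B2 v w) G (char_prod ch1 ch2) (\<lambda>\<tau> z. f1 \<tau> z * f2 \<tau> z)
         \<and> ((jacobi_cusp_form k1 L B1 G ch1 f1 \<or> jacobi_cusp_form k2 L B2 G ch2 f2) \<longrightarrow>
             jacobi_cusp_form (k1 + k2) L (\<lambda>v w. B1 v w + B2 v w) G (char_prod ch1 ch2) (\<lambda>\<tau> z. f1 \<tau> z * f2 \<tau> z))))"
proof -
  have "bilinear B1" "bilinear B2"
    using assms(3,4) by (simp_all add: pos_def_sym_form_bilinear)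
  then have "linear_character (jacobi_group G L (\<lambda>v w. B1 v w + B2 v w)) (char_prod ch1 ch2)"
    using assms(10,13) char_prod_hom[OF _ _ _ _ assms(8,5,6,7,12,15)]
    by (simp add: linear_character_def)
  then show ?thesis
    using jacobi_form_mult[OF assms(3,4,1,2,8)] jacobi_cusp_form_mult[OF assms(3,4,1,2,8)] by blast
qed

end
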